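(* Fix $n\ge1$. The set $\mathcal S_n=\{H\in\mathcal H: X_n(H)=0,\ H^{(n)}=z^n\}$ coincides with the set of $H\in\mathcal H$ satisfying $H^{(n)}=z^n$ and $$H^{(j+n)}=z^nH^{(j)}-\sum_{l=1}^{n}H^j_lH^{(n-l)}\qquad\text{for all }j\ge0.$$ In particular, the map $H\mapsto(H^{(1)},\dots,H^{(n-1)})$ is a bijection from $\mathcal S_n$ onto the set of $(n-1)$-tuples of Laurent series of the form $H^{(a)}=z^a+\sum_{l\ge1}H^a_lz^{-l}$ (with arbitrary coefficients).
   Context: Let $z$ be a formal variable and $\mathcal L$ the space of formal Laurent series $\sum_{j\le N} l_j z^j$ (finitely many positive powers of $z$). Let $\mathcal H$ be the set of sequences $H=(H^{(k)})_{k\ge0}$ of elements of $\mathcal L$ with $H^{(0)}=1$ and, for $k\ge1$, $H^{(k)}=z^k+\sum_{l\ge1}H^k_l z^{-l}$; the coefficients $H^k_l$ are coordinates on $\mathcal H$, and we set $H^0_l=0$. The central system (CS) is the family of vector fields $X_j$, $j\ge1$, on $\mathcal H$, with associated times $t_j$, defined by $$\frac{\partial H^{(k)}}{\partial t_j}=H^{(j+k)}-H^{(j)}H^{(k)}+\sum_{l=1}^{k}H^j_lH^{(k-l)}+\sum_{l=1}^{j}H^k_lH^{(j-l)},\qquad k\ge0;$$ the right-hand side contains only negative powers of $z$, so this determines the components $X_j(H^k_l)$. *)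

theory Defs
  imports "HOL-Computational_Algebra.Formal_Laurent_Series"
begin

text \<open>Representation of the space L of formal Laurent series in z with finitely many
positive powers of z: we use the library type of formal Laurent series in w = 1/z
(finitely many negative powers of w).  Hence z is fls_X_inv, and the coefficient of
z^j of a series f is fls_nth f (-j).\<close>

abbreviation zvar :: "complex fls" where "zvar \<equiv> fls_X_inv"

text \<open>A point H of the space of sequences is given by its coordinates c k l = H^k_l
(k \<ge> 1, l \<ge> 1).  Coordinates with k = 0 or l = 0 do not exist; they are normalised
to 0 (this also realises the convention H^0_l = 0).\<close>

definition Hspace :: "(nat \<Rightarrow> nat \<Rightarrow> complex) set" where
  "Hspace = {c. (\<forall>l. c 0 l = 0) \<and> (\<forall>k. c k 0 = 0)}"

definition tail :: "(nat \<Rightarrow> complex) \<Rightarrow> complex fls" where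
  "tail a = Abs_fls (\<lambda>i. if i \<ge> 1 then a (nat i) else 0)"

definition Hser :: "(nat \<Rightarrow> nat \<Rightarrow> complex) \<Rightarrow> nat \<Rightarrow> complex fls" where
  "Hser c k = (if k = 0 then 1 else zvar ^ k + tail (c k))"

text \<open>Right-hand side of the central system equation for dH^(k)/dt_j.\<close>
definition CS_rhs :: "(nat \<Rightarrow> nat \<Rightarrow> complex) \<Rightarrow> nat \<Rightarrow> nat \<Rightarrow> complex fls" where
  "CS_rhs c j k = Hser c (j + k) - Hser c j * Hser c k
     + (\<Sum>l=1..k. fls_const (c j l) * Hser c (k - l))
     + (\<Sum>l=1..j. fls_const (c k l) * Hser c (j - l))"

definition X_comp :: "nat \<Rightarrow> (nat \<Rightarrow> nat \<Rightarrow> complex) \<Rightarrow> nat \<Rightarrow> nat \<Rightarrow> complex" where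
  "X_comp j c k l = fls_nth (CS_rhs c j k) (int l)"

definition X_zero :: "nat \<Rightarrow> (nat \<Rightarrow> nat \<Rightarrow> complex) \<Rightarrow> bool" where
  "X_zero j c \<longleftrightarrow> (\<forall>k\<ge>1. \<forall>l\<ge>1. X_comp j c k l = 0)"

definition S_set :: "nat \<Rightarrow> (nat \<Rightarrow> nat \<Rightarrow> complex) set" where
  "S_set n = {c \<in> Hspace. X_zero n c \<and> Hser c n = zvar ^ n}"

definition Lform :: "nat \<Rightarrow> complex fls set" where
  "Lform a = {f. fls_nth f (- int a) = 1 \<and> (\<forall>i. i < 1 \<and> i \<noteq> - int a \<longrightarrow> fls_nth f i = 0)}"

end

theory Submission
  imports Defs
begin

text \<open>When H^(n) = z^n, X_n(H^(k)) is R_k = H^(k+n) - z^n H^(k) + \<Sum>_l H^k_l H^(n-l).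
Subtracting \<Sum>_l H^k_l H^(n-l) from z^n H^(k) cancels the terms z^(n-l) of its polynomial part,
so both H^(k+n) and z^n H^(k) - \<Sum>_l H^k_l H^(n-l) have polynomial part exactly z^(k+n), and
R_k = 0 iff its coefficients of z^(-l), l \<ge> 1, vanish. Thus X_n(H) = 0 is the recurrence
H^(k+n) = z^n H^(k) - \<Sum>_l H^k_l H^(n-l), which determines every H^(k) from H^(1), ..., H^(n-1)
and, read as a definition, produces a point of S_n from any choice of them.\<close>

lemma Lform_iff: "f \<in> Lform a \<longleftrightarrow> (\<forall>i\<le>0. fls_nth f i = (if i = - int a then 1 else 0))"
  unfolding Lform_def by force

lemma Lform_eq_iff:
  assumes "f \<in> Lform a" "g \<in> Lform a"
  shows "f = g \<longleftrightarrow> (\<forall>l\<ge>1. fls_nth f (int l) = fls_nth g (int l))"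
proof
  assume "\<forall>l\<ge>1. fls_nth f (int l) = fls_nth g (int l)"
  then have "fls_nth f i = fls_nth g i" for i
    using assms by (cases "i \<le> 0") (auto simp: Lform_iff dest: spec[of _ "nat i"] split: if_splits)
  then show "f = g" by (simp add: fls_eq_iff)
qed simp

lemma tail_nth: "fls_nth (tail a) i = (if i \<ge> 1 then a (nat i) else 0)"
  unfolding tail_def by (subst Abs_fls_inverse) auto

lemma Hser_nth:
  assumes "c \<in> Hspace"
  shows "fls_nth (Hser c k) i = (if i = - int k then 1 else 0) + (if i \<ge> 1 then c k (nat i) else 0)"
  using assms by (auto simp: Hser_def tail_nth Hspace_def)

lemma Hser_in_Lform: "c \<in> Hspace \<Longrightarrow> Hser c k \<in> Lform k"
  by (simp add: Lform_iff Hser_nth)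

definition coeffs_of :: "(nat \<Rightarrow> complex fls) \<Rightarrow> nat \<Rightarrow> nat \<Rightarrow> complex" where
  "coeffs_of G k l = (if 1 \<le> k \<and> 1 \<le> l then fls_nth (G k) (int l) else 0)"

lemma coeffs_of_in_Hspace: "coeffs_of G \<in> Hspace"
  by (simp add: coeffs_of_def Hspace_def)

lemma coeffs_of_Hser: "c \<in> Hspace \<Longrightarrow> coeffs_of (Hser c) = c"
  by (auto simp: fun_eq_iff coeffs_of_def Hser_nth Hspace_def not_less_eq_eq)

lemma Hser_coeffs_of:
  assumes "G 0 = 1" "\<And>k. G k \<in> Lform k"
  shows "Hser (coeffs_of G) = G"
proof
  fix k
  show "Hser (coeffs_of G) k = G k"
  proof (cases "k = 0")
    case False
    with assms(2) show ?thesis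
      by (subst Lform_eq_iff[OF Hser_in_Lform[OF coeffs_of_in_Hspace]])
         (auto simp: Hser_nth[OF coeffs_of_in_Hspace] coeffs_of_def)
  qed (simp add: Hser_def assms(1))
qed

definition reduced_shift :: "nat \<Rightarrow> (nat \<Rightarrow> complex fls) \<Rightarrow> complex fls \<Rightarrow> complex fls" where
  "reduced_shift n B f = zvar ^ n * f - (\<Sum>l=1..n. fls_const (fls_nth f (int l)) * B (n - l))"

lemma reduced_shift_cong:
  "(\<And>m. m < n \<Longrightarrow> B m = B' m) \<Longrightarrow> reduced_shift n B f = reduced_shift n B' f"
  unfolding reduced_shift_def by (intro arg_cong2[where f = minus] sum.cong) auto

lemma reduced_shift_one: "reduced_shift n B 1 = zvar ^ n"
  by (simp add: reduced_shift_def)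

lemma reduced_shift_Hser:
  assumes "c \<in> Hspace"
  shows "reduced_shift n (Hser c) (Hser c j)
    = zvar ^ n * Hser c j - (\<Sum>l=1..n. fls_const (c j l) * Hser c (n - l))"
  unfolding reduced_shift_def using assms by (intro arg_cong2[where f = minus] sum.cong) (auto simp: Hser_nth)

lemma reduced_shift_in_Lform:
  assumes f: "f \<in> Lform k" and B: "\<And>m. m < n \<Longrightarrow> B m \<in> Lform m"
  shows "reduced_shift n B f \<in> Lform (k + n)"
  unfolding Lform_iff
proof (intro allI impI)
  fix i :: int assume i: "i \<le> 0"
  have "fls_nth (\<Sum>l=1..n. fls_const (fls_nth f (int l)) * B (n - l)) i
      = (\<Sum>l\<in>{1..n}. if l = nat (i + int n) then fls_nth f (int l) else 0)"
    unfolding fls_nth_sum using i B by (intro sum.cong) (auto simp: Lform_iff)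
  also have "\<dots> = (if i + int n \<ge> 1 then fls_nth f (i + int n) else 0)"
    using i by (simp add: sum.delta) linarith
  finally show "fls_nth (reduced_shift n B f) i = (if i = - int (k + n) then 1 else 0)"
    using f i by (auto simp: reduced_shift_def fls_X_inv_power_times_conv_shift Lform_iff)
qed

lemma CS_rhs_eq:
  assumes c: "c \<in> Hspace" and hn: "Hser c n = zvar ^ n"
  shows "CS_rhs c n k = Hser c (k + n) - reduced_shift n (Hser c) (Hser c k)"
proof -
  have "c n l = 0" for l
  proof -
    have "c n l = coeffs_of (Hser c) n l" by (simp add: coeffs_of_Hser[OF c])
    then show ?thesis by (simp add: coeffs_of_def hn)
  qed
  then show ?thesis
    unfolding CS_rhs_def reduced_shift_Hser[OF c] hn by (simp add: add.commute)
qed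

lemma X_zero_iff_recurrence:
  assumes c: "c \<in> Hspace" and hn: "Hser c n = zvar ^ n"
  shows "X_zero n c \<longleftrightarrow> (\<forall>k. Hser c (k + n) = reduced_shift n (Hser c) (Hser c k))"
proof -
  have "Hser c (k + n) = reduced_shift n (Hser c) (Hser c k) \<longleftrightarrow> (\<forall>l\<ge>1. X_comp n c k l = 0)" for k
    using Lform_eq_iff[OF Hser_in_Lform[OF c] reduced_shift_in_Lform[OF Hser_in_Lform[OF c] Hser_in_Lform[OF c]]]
    by (simp add: X_comp_def CS_rhs_eq[OF c hn])
  moreover have "Hser c (0 + n) = reduced_shift n (Hser c) (Hser c 0)"
    using hn by (simp add: Hser_def reduced_shift_one)
  ultimately show ?thesis
    unfolding X_zero_def by (metis One_nat_def not_less_eq_eq le_zero_eq)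
qed

lemma S_set_eq:
  "S_set n = {c \<in> Hspace. Hser c n = zvar ^ n \<and> (\<forall>j. Hser c (j + n) = reduced_shift n (Hser c) (Hser c j))}"
  unfolding S_set_def using X_zero_iff_recurrence by blast

lemma recurrence_unique:
  assumes n: "n \<ge> 1" and init: "\<And>k. k < n \<Longrightarrow> G k = G' k"
    and G: "\<And>j. G (j + n) = reduced_shift n G (G j)"
    and G': "\<And>j. G' (j + n) = reduced_shift n G' (G' j)"
  shows "G = G'"
proof
  fix k
  show "G k = G' k"
  proof (induction k rule: less_induct)
    case (less k)
    show ?case
    proof (cases "k < n")
      case False
      define j where "j = k - n"
      have k: "k = j + n" using False unfolding j_def by simp
      have "reduced_shift n G (G j) = reduced_shift n G' (G j)"
        by (rule reduced_shift_cong) (use less.IH False in auto)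
      then show ?thesis using less.IH[of j] n k G G' by simp
    qed (rule init)
  qed
qed

text \<open>The guard n = 0 only serves termination; F(0 := 1) supplies H^(0) = 1.\<close>

function recurrence_extension :: "nat \<Rightarrow> (nat \<Rightarrow> complex fls) \<Rightarrow> nat \<Rightarrow> complex fls" where
  "recurrence_extension n F k = (if n = 0 \<or> k < n then (F(0 := 1)) k
     else reduced_shift n (F(0 := 1)) (recurrence_extension n F (k - n)))"
  by pat_completeness auto
termination by (relation "measure (\<lambda>(n, F, k). k)") auto

declare recurrence_extension.simps [simp del]

lemma recurrence_extension_less: "k < n \<Longrightarrow> recurrence_extension n F k = (F(0 := 1)) k"
  by (simp add: recurrence_extension.simps)

lemma recurrence_extension_rec:
  assumes "n \<ge> 1"
  shows "recurrence_extension n F (j + n)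
    = reduced_shift n (recurrence_extension n F) (recurrence_extension n F j)"
proof -
  have "reduced_shift n (F(0 := 1)) f = reduced_shift n (recurrence_extension n F) f" for f
    by (rule reduced_shift_cong) (simp add: recurrence_extension_less)
  then show ?thesis using assms by (subst recurrence_extension.simps) simp
qed

lemma recurrence_extension_at_n: "n \<ge> 1 \<Longrightarrow> recurrence_extension n F n = zvar ^ n"
  using recurrence_extension_rec[of n F 0] by (simp add: recurrence_extension_less reduced_shift_one)

lemma recurrence_extension_in_Lform:
  assumes n: "n \<ge> 1" and F: "\<And>m. m \<in> {1..<n} \<Longrightarrow> F m \<in> Lform m"
  shows "recurrence_extension n F k \<in> Lform k"
proof (induction k rule: less_induct)
  case (less k)
  have init: "recurrence_extension n F m \<in> Lform m" if "m < n" for m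
    using that F by (cases "m = 0") (auto simp: recurrence_extension_less Lform_iff)
  show ?case
  proof (cases "k < n")
    case False
    define j where "j = k - n"
    have k: "k = j + n" using False unfolding j_def by simp
    show ?thesis
      unfolding k recurrence_extension_rec[OF n]
      using n k by (intro reduced_shift_in_Lform less.IH init) auto
  qed (rule init)
qed

lemma Hser_coeffs_of_recurrence_extension:
  assumes "n \<ge> 1" "F \<in> PiE {1..<n} Lform"
  shows "Hser (coeffs_of (recurrence_extension n F)) = recurrence_extension n F"
  using assms by (intro Hser_coeffs_of recurrence_extension_in_Lform) (auto simp: recurrence_extension_less)

lemma bij_betw_S_set_initial_segment:
  assumes n: "n \<ge> 1"
  shows "bij_betw (\<lambda>c. restrict (Hser c) {1..<n}) (S_set n) (PiE {1..<n} Lform)"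
proof (rule bij_betwI[where g = "\<lambda>F. coeffs_of (recurrence_extension n F)"])
  show "(\<lambda>c. restrict (Hser c) {1..<n}) \<in> S_set n \<rightarrow> PiE {1..<n} Lform"
    by (auto simp: S_set_def Hser_in_Lform)
  show "(\<lambda>F. coeffs_of (recurrence_extension n F)) \<in> PiE {1..<n} Lform \<rightarrow> S_set n"
    using n by (auto simp: S_set_eq coeffs_of_in_Hspace Hser_coeffs_of_recurrence_extension
        recurrence_extension_at_n recurrence_extension_rec)
  show "coeffs_of (recurrence_extension n (restrict (Hser c) {1..<n})) = c" if "c \<in> S_set n" for c
  proof -
    have c: "c \<in> Hspace" and rec: "\<And>j. Hser c (j + n) = reduced_shift n (Hser c) (Hser c j)"
      using that unfolding S_set_eq by auto
    have "recurrence_extension n (restrict (Hser c) {1..<n}) = Hser c"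
      by (rule recurrence_unique[OF n _ recurrence_extension_rec[OF n] rec])
         (auto simp: recurrence_extension_less Hser_def)
    then show ?thesis using coeffs_of_Hser[OF c] by simp
  qed
  show "restrict (Hser (coeffs_of (recurrence_extension n F))) {1..<n} = F"
    if "F \<in> PiE {1..<n} Lform" for F
    using that n by (auto simp: Hser_coeffs_of_recurrence_extension recurrence_extension_less
        fun_eq_iff PiE_def extensional_def)
qed

theorem mainTheorem6:
  fixes n :: nat
  assumes "n \<ge> 1"
  shows "S_set n = {c \<in> Hspace. Hser c n = zvar ^ n \<and>
            (\<forall>j. Hser c (j + n) = zvar ^ n * Hser c j
                   - (\<Sum>l=1..n. fls_const (c j l) * Hser c (n - l)))}
         \<and> bij_betw (\<lambda>c. restrict (Hser c) {1..<n}) (S_set n) (PiE {1..<n} Lform)"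
  using bij_betw_S_set_initial_segment[OF assms] by (auto simp: S_set_eq reduced_shift_Hser)

end
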